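(* Let $n \geq 2$. (1) If $a(n-1) <_4 a(n+1)$ and $a(n) \leq_4 a(n+2)$, then $S(n) = \frac{a(n)a(n+1)}{4}$. (2) If $a(n-1) >_4 a(n+1)$ and $a(n) \geq_4 a(n+2)$, then $S(n) = \frac{a(n)a(n+1)}{4} + \frac12$. (3) If $a(n-1) <_4 a(n+1)$ and $a(n) >_4 a(n+2)$, then $S(n) = \frac{a(n)(a(n+1)-1)}{4}$. (4) If $a(n-1) >_4 a(n+1)$ and $a(n) <_4 a(n+2)$, then $S(n) = \frac{(a(n)+1)a(n+1)}{4}$.
   Context: $(a(n))_{n\geq0}$ is the increasing sequence (indexed from $0$, so $a(0)=1,a(1)=2,a(2)=4,a(3)=7,\ldots$) of odious numbers, i.e. nonnegative integers whose sum of binary digits is odd, and $S(n) = \sum_{k=0}^n a(k)$. For integers $x, y$, let $\bar x, \bar y \in \{0,1,2,3\}$ be their residues modulo $4$; write $x <_4 y$ if $\bar x < \bar y$, $x \leq_4 y$ if $\bar x \leq \bar y$, and $x >_4 y$ (resp. $x \geq_4 y$) if $y <_4 x$ (resp. $y \leq_4 x$). *)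

theory Defs
  imports Complex_Main "HOL-Library.Infinite_Set"
begin

fun bin_digit_sum :: "nat \<Rightarrow> nat" where
  "bin_digit_sum n = (if n = 0 then 0 else n mod 2 + bin_digit_sum (n div 2))"

declare bin_digit_sum.simps[simp del]

definition odious :: "nat \<Rightarrow> bool" where
  "odious m \<longleftrightarrow> odd (bin_digit_sum m)"

text \<open>a n: the n-th odious number in increasing order, indexed from 0 (a 0 = 1).\<close>
definition a :: "nat \<Rightarrow> nat" where
  "a n = enumerate {m. odious m} n"

definition S :: "nat \<Rightarrow> nat" where
  "S n = (\<Sum>k\<le>n. a k)"

definition lt4 :: "nat \<Rightarrow> nat \<Rightarrow> bool" where
  "lt4 x y \<longleftrightarrow> x mod 4 < y mod 4"

definition le4 :: "nat \<Rightarrow> nat \<Rightarrow> bool" where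
  "le4 x y \<longleftrightarrow> x mod 4 \<le> y mod 4"

end

theory Submission
  imports Defs
begin

text \<open>
  Writing a number as 2q + r with r < 2, its binary digit sum is
  r + (digit sum of q). Hence exactly one of 2k, 2k + 1 is odious, namely
  2k + evil_bit k, where evil_bit k is 1 if k is evil (not odious) and 0 otherwise.
  Since k \<mapsto> 2k + evil_bit k is strictly increasing with range the odious
  numbers, a k = 2k + evil_bit k. Consequently a(2m) = 4m + \<epsilon> and
  a(2m+1) = 4m + 3 - \<epsilon> with \<epsilon> = evil_bit (2m) \<in> {0,1}, so consecutive pairs sum
  to 8m + 3 and S(2m+1) = (m+1)(4m+3).

  For n = 2m+1 and n = 2m+2 the four values a(n-1), ..., a(n+2) and S(n) are
  thus explicit in m and two or three bits; their residues modulo 4 are read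
  off directly, and the four identities of the theorem (bundled in the
  predicate sum_identities) reduce to finitely many polynomial identities in m.
\<close>

text \<open>The defining equation is not a simp rule; its base case is needed separately.\<close>
lemma bin_digit_sum_0: "bin_digit_sum 0 = 0"
  by (subst bin_digit_sum.simps) simp

lemma bin_digit_sum_append_digit:
  assumes "r < 2"
  shows "bin_digit_sum (2 * q + r) = r + bin_digit_sum q"
proof (cases "2 * q + r = 0")
  case True
  then show ?thesis by (simp add: bin_digit_sum_0)
next
  case False
  then have "bin_digit_sum (2 * q + r) = (2 * q + r) mod 2 + bin_digit_sum ((2 * q + r) div 2)"
    by (subst bin_digit_sum.simps) (simp add: bin_digit_sum_0)
  then show ?thesis using assms by simp
qed

lemma odious_append_digit:
  assumes "r < 2"
  shows "odious (2 * q + r) \<longleftrightarrow> (odious q \<longleftrightarrow> r = 0)"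
  using bin_digit_sum_append_digit[OF assms] assms
  by (cases r) (auto simp: odious_def)

definition evil_bit :: "nat \<Rightarrow> nat" where
  "evil_bit k = (if odious k then 0 else 1)"

lemma evil_bit_le_1: "evil_bit k \<le> 1"
  by (simp add: evil_bit_def)

text \<open>Of the two numbers 2k and 2k + 1 exactly one is odious: 2k + evil_bit k.\<close>
lemma odious_set: "{x. odious x} = range (\<lambda>k. 2 * k + evil_bit k)"
proof (intro set_eqI iffI)
  fix x
  assume "x \<in> {x. odious x}"
  then have "odious (x div 2) \<longleftrightarrow> x mod 2 = 0"
    using odious_append_digit[of "x mod 2" "x div 2"] by simp
  then have "x mod 2 = evil_bit (x div 2)"
    by (auto simp: evil_bit_def)
  then have "x = 2 * (x div 2) + evil_bit (x div 2)"
    using div_mult_mod_eq[of x 2] by linarith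
  then show "x \<in> range (\<lambda>k. 2 * k + evil_bit k)" by blast
next
  fix x
  assume "x \<in> range (\<lambda>k. 2 * k + evil_bit k)"
  then obtain k where "x = 2 * k + evil_bit k" by blast
  then show "x \<in> {x. odious x}"
    using odious_append_digit[of "evil_bit k" k] by (simp add: evil_bit_def)
qed

lemma enumerate_range_strict_mono:
  fixes f :: "nat \<Rightarrow> nat"
  assumes mono: "strict_mono f"
  shows "enumerate (range f) k = f k"
proof (induction k)
  case 0
  have "enumerate (range f) 0 = (LEAST s. s \<in> range f)"
    by (rule enumerate_0)
  also have "\<dots> = f 0"
    by (rule Least_equality) (auto simp: strict_mono_less_eq[OF mono])
  finally show ?case .
next
  case (Suc k)
  have "infinite (range f)"
    using range_inj_infinite strict_mono_imp_inj_on[OF mono] by blast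
  then have "enumerate (range f) (Suc k) = (LEAST s. s \<in> range f \<and> enumerate (range f) k < s)"
    by (rule enumerate_Suc'')
  also have "\<dots> = f (Suc k)"
    using Suc by (intro Least_equality) (auto simp: strict_mono_less[OF mono] strict_mono_less_eq[OF mono] Suc_le_eq)
  finally show ?case .
qed

lemma a_eq: "a k = 2 * k + evil_bit k"
proof -
  have "strict_mono (\<lambda>k. 2 * k + evil_bit k)"
    unfolding strict_mono_Suc_iff
  proof
    fix k
    show "2 * k + evil_bit k < 2 * Suc k + evil_bit (Suc k)"
      using evil_bit_le_1[of k] by simp
  qed
  then show ?thesis
    unfolding a_def odious_set by (rule enumerate_range_strict_mono)
qed

lemma evil_bit_pair: "evil_bit (2 * m + 1) = 1 - evil_bit (2 * m)"
  using odious_append_digit[of 0 m] odious_append_digit[of 1 m]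
  by (simp add: evil_bit_def)

lemma a_pair:
  "a (2 * m) = 4 * m + evil_bit (2 * m)"
  "a (2 * m + 1) = 4 * m + (3 - evil_bit (2 * m))"
  unfolding a_eq evil_bit_pair using evil_bit_le_1[of "2 * m"] by simp_all

lemma S_Suc: "S (Suc k) = S k + a (Suc k)"
  by (simp add: S_def)

text \<open>Each pair contributes a(2j) + a(2j+1) = 8j + 3.\<close>
lemma S_odd: "S (2 * m + 1) = (m + 1) * (4 * m + 3)"
proof (induction m)
  case 0
  show ?case using a_pair[of 0] evil_bit_le_1[of 0] by (simp add: S_def)
next
  case (Suc m)
  have "2 * Suc m = Suc (2 * m + 1)" "2 * Suc m + 1 = Suc (Suc (2 * m + 1))"
    by simp_all
  then have "S (2 * Suc m + 1) = S (2 * m + 1) + a (2 * Suc m) + a (2 * Suc m + 1)"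
    by (simp only: S_Suc)
  also have "\<dots> = (m + 1) * (4 * m + 3) + (4 * Suc m + evil_bit (2 * Suc m))
      + (4 * Suc m + (3 - evil_bit (2 * Suc m)))"
    by (simp only: Suc.IH a_pair)
  also have "\<dots> = (Suc m + 1) * (4 * Suc m + 3)"
    using evil_bit_le_1[of "2 * Suc m"] by (simp add: algebra_simps)
  finally show ?case .
qed

lemma S_even: "S (2 * (m + 1)) = (m + 1) * (4 * m + 3) + a (2 * (m + 1))"
proof -
  have "2 * (m + 1) = Suc (2 * m + 1)" by simp
  then show ?thesis by (simp only: S_Suc S_odd)
qed

text \<open>
  The conclusion of the theorem for a partial sum s and four consecutive
  terms w, x, y, z (standing for a(n-1), a(n), a(n+1), a(n+2)).
\<close>
definition sum_identities :: "nat \<Rightarrow> nat \<Rightarrow> nat \<Rightarrow> nat \<Rightarrow> nat \<Rightarrow> bool" where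
  "sum_identities s w x y z \<longleftrightarrow>
     (lt4 w y \<and> le4 x z \<longrightarrow> real s = real x * real y / 4)
   \<and> (lt4 y w \<and> le4 z x \<longrightarrow> real s = real x * real y / 4 + 1 / 2)
   \<and> (lt4 w y \<and> lt4 z x \<longrightarrow> real s = real x * (real y - 1) / 4)
   \<and> (lt4 y w \<and> lt4 x z \<longrightarrow> real s = (real x + 1) * real y / 4)"

lemma mod4_offset: "c < 4 \<Longrightarrow> (4 * k + c) mod 4 = (c :: nat)"
  by simp

text \<open>
  Odd n = 2m+1: residues \<epsilon>, 3 - \<epsilon>, \<delta>, 3 - \<delta>; only identities (3) and (4)
  have satisfiable hypotheses.
\<close>
lemma sum_identities_odd_case:
  fixes m \<epsilon> \<delta> :: nat
  assumes "\<epsilon> \<le> 1" "\<delta> \<le> 1"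
  shows "sum_identities ((m + 1) * (4 * m + 3))
           (4 * m + \<epsilon>) (4 * m + (3 - \<epsilon>)) (4 * (m + 1) + \<delta>) (4 * (m + 1) + (3 - \<delta>))"
proof -
  have residues: "(4 * m + \<epsilon>) mod 4 = \<epsilon>" "(4 * m + (3 - \<epsilon>)) mod 4 = 3 - \<epsilon>"
    "(4 * (m + 1) + \<delta>) mod 4 = \<delta>" "(4 * (m + 1) + (3 - \<delta>)) mod 4 = 3 - \<delta>"
    by (intro mod4_offset; use assms in simp)+
  have "\<epsilon> = 0 \<or> \<epsilon> = 1" "\<delta> = 0 \<or> \<delta> = 1" using assms by auto
  then show ?thesis
    unfolding sum_identities_def lt4_def le4_def residues
    by (elim disjE) (simp_all add: field_simps)
qed

text \<open>
  Even n = 2m+2: residues 3 - \<epsilon>, \<eta>, 3 - \<eta>, \<zeta>; only identities (1) and (2)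
  have satisfiable hypotheses.
\<close>
lemma sum_identities_even_case:
  fixes m \<epsilon> \<eta> \<zeta> :: nat
  assumes "\<epsilon> \<le> 1" "\<eta> \<le> 1" "\<zeta> \<le> 1"
  shows "sum_identities ((m + 1) * (4 * m + 3) + (4 * (m + 1) + \<eta>))
           (4 * m + (3 - \<epsilon>)) (4 * (m + 1) + \<eta>) (4 * (m + 1) + (3 - \<eta>)) (4 * (m + 2) + \<zeta>)"
proof -
  have residues: "(4 * m + (3 - \<epsilon>)) mod 4 = 3 - \<epsilon>" "(4 * (m + 1) + \<eta>) mod 4 = \<eta>"
    "(4 * (m + 1) + (3 - \<eta>)) mod 4 = 3 - \<eta>" "(4 * (m + 2) + \<zeta>) mod 4 = \<zeta>"
    by (intro mod4_offset; use assms in simp)+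
  have "\<epsilon> = 0 \<or> \<epsilon> = 1" "\<eta> = 0 \<or> \<eta> = 1" using assms by auto
  then show ?thesis
    using assms(3)
    unfolding sum_identities_def lt4_def le4_def residues
    by (elim disjE) (simp_all add: field_simps)
qed

lemma sum_identities_odd:
  "sum_identities (S (2 * m + 1)) (a (2 * m)) (a (2 * m + 1)) (a (2 * (m + 1))) (a (2 * (m + 1) + 1))"
  unfolding S_odd a_pair
  by (rule sum_identities_odd_case[OF evil_bit_le_1 evil_bit_le_1])

lemma sum_identities_even:
  "sum_identities (S (2 * (m + 1))) (a (2 * m + 1)) (a (2 * (m + 1))) (a (2 * (m + 1) + 1))
     (a (2 * (m + 2)))"
  unfolding S_even a_pair
  by (rule sum_identities_even_case[OF evil_bit_le_1 evil_bit_le_1 evil_bit_le_1])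

theorem theorem3:
  fixes n :: nat
  assumes "n \<ge> 2"
  shows "(lt4 (a (n - 1)) (a (n + 1)) \<and> le4 (a n) (a (n + 2)) \<longrightarrow>
            real (S n) = real (a n) * real (a (n + 1)) / 4)
       \<and> (lt4 (a (n + 1)) (a (n - 1)) \<and> le4 (a (n + 2)) (a n) \<longrightarrow>
            real (S n) = real (a n) * real (a (n + 1)) / 4 + 1 / 2)
       \<and> (lt4 (a (n - 1)) (a (n + 1)) \<and> lt4 (a (n + 2)) (a n) \<longrightarrow>
            real (S n) = real (a n) * (real (a (n + 1)) - 1) / 4)
       \<and> (lt4 (a (n + 1)) (a (n - 1)) \<and> lt4 (a n) (a (n + 2)) \<longrightarrow>
            real (S n) = (real (a n) + 1) * real (a (n + 1)) / 4)"
proof -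
  have "sum_identities (S n) (a (n - 1)) (a n) (a (n + 1)) (a (n + 2))"
  proof (cases "even n")
    case True
    then obtain k where k: "n = 2 * k" by (elim evenE)
    with assms have "n = 2 * ((k - 1) + 1)" by simp
    then obtain m where n: "n = 2 * (m + 1)" by blast
    have index_shifts: "2 * (m + 1) - 1 = 2 * m + 1" "2 * (m + 1) + 2 = 2 * (m + 2)"
      by simp_all
    show ?thesis unfolding n index_shifts by (rule sum_identities_even)
  next
    case False
    then obtain m where n: "n = 2 * m + 1" by (elim oddE)
    have index_shifts: "2 * m + 1 - 1 = 2 * m" "2 * m + 1 + 1 = 2 * (m + 1)"
      "2 * m + 1 + 2 = 2 * (m + 1) + 1"
      by simp_all
    show ?thesis unfolding n index_shifts by (rule sum_identities_odd)
  qed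
  then show ?thesis unfolding sum_identities_def .
qed

end
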